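(* Let $\mathcal D$ be a non-trivial $2$-$(k^{2},k,\lambda)$ design with $\lambda\mid k$ and $G$ a flag-transitive automorphism group which is almost simple with socle $X$. Then for every point $x$ and every point $y\neq x$, the integer $\frac{k+1}{\gcd(k+1,|\mathrm{Out}(X)|)}$ divides $|y^{X_x}|$, and hence divides $|X_x|$.
   Context: A $2$-$(v,k,\lambda)$ design: $v$ points, blocks are $k$-subsets, every two distinct points lie in exactly $\lambda$ blocks; non-trivial: $2<k<v$. Flag-transitive: transitive on incident point–block pairs. $G$ almost simple with socle $X$ means $X\trianglelefteq G\le\mathrm{Aut}(X)$ with $X$ non-abelian simple. $X_x$ is the stabilizer in $X$ of the point $x$, $y^{X_x}$ the orbit of $y$ under $X_x$, $\mathrm{Out}(X)=\mathrm{Aut}(X)/\mathrm{Inn}(X)$. *)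

theory Defs
  imports "HOL-Algebra.Algebra"
begin

definition design_2 :: "'a set \<Rightarrow> 'a set set \<Rightarrow> nat \<Rightarrow> nat \<Rightarrow> nat \<Rightarrow> bool" where
  "design_2 P B v k lam \<longleftrightarrow>
     finite P \<and> card P = v \<and>
     (\<forall>b\<in>B. b \<subseteq> P \<and> card b = k) \<and>
     (\<forall>x\<in>P. \<forall>y\<in>P. x \<noteq> y \<longrightarrow> card {b\<in>B. x \<in> b \<and> y \<in> b} = lam)"

definition nontrivial_design_2 :: "'a set \<Rightarrow> 'a set set \<Rightarrow> nat \<Rightarrow> nat \<Rightarrow> nat \<Rightarrow> bool" where
  "nontrivial_design_2 P B v k lam \<longleftrightarrow> design_2 P B v k lam \<and> 2 < k \<and> k < v"

definition design_aut_group :: "'a set \<Rightarrow> 'a set set \<Rightarrow> ('a \<Rightarrow> 'a) set \<Rightarrow> bool" where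
  "design_aut_group P B G \<longleftrightarrow>
     subgroup G (BijGroup P) \<and> (\<forall>g\<in>G. \<forall>b\<in>B. g ` b \<in> B)"

definition flag_transitive :: "'a set \<Rightarrow> 'a set set \<Rightarrow> ('a \<Rightarrow> 'a) set \<Rightarrow> bool" where
  "flag_transitive P B G \<longleftrightarrow>
     (\<forall>x b y c. x \<in> P \<and> b \<in> B \<and> x \<in> b \<and> y \<in> P \<and> c \<in> B \<and> y \<in> c \<longrightarrow>
        (\<exists>g\<in>G. g x = y \<and> g ` b = c))"

definition inn_auts :: "('g, 'c) monoid_scheme \<Rightarrow> ('g \<Rightarrow> 'g) set" where
  "inn_auts S = (\<lambda>g. restrict (\<lambda>y. monoid.mult S (monoid.mult S g y) (m_inv S g)) (carrier S)) ` carrier S"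

definition out_order :: "('g, 'c) monoid_scheme \<Rightarrow> nat" where
  "out_order S = order (AutoGroup S) div card (inn_auts S)"

text \<open>G almost simple with socle S: S is a non-abelian simple normal subgroup of G and
  G acts faithfully on S by conjugation (i.e. S \<unlhd> G \<le> Aut(S), with S identified with Inn(S)).\<close>
definition almost_simple_with_socle :: "('g, 'c) monoid_scheme \<Rightarrow> 'g set \<Rightarrow> bool" where
  "almost_simple_with_socle G S \<longleftrightarrow>
     group G \<and> S \<lhd> G \<and>
     simple_group (G\<lparr>carrier := S\<rparr>) \<and> \<not> comm_group (G\<lparr>carrier := S\<rparr>) \<and>
     (\<forall>g\<in>carrier G. (\<forall>h\<in>S. monoid.mult G (monoid.mult G g h) (m_inv G g) = h) \<longrightarrow> g = monoid.one G)"

end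

theory Submission
  imports Defs
begin

text \<open>
  Fix a point \<open>x\<close>. Counting flags through \<open>x\<close> gives \<open>r (k - 1) = \<lambda> (k\<^sup>2 - 1)\<close>, so
  \<open>x\<close> lies on \<open>r = \<lambda> (k + 1)\<close> blocks. Flag-transitivity makes \<open>G\<^sub>x\<close> transitive on these
  blocks, so a \<open>G\<^sub>x\<close>-orbit \<open>O\<close> of points \<open>\<noteq> x\<close> meets each of them in the same number
  \<open>c\<close> of points; counting incidences between \<open>O\<close> and the blocks through \<open>x\<close> gives
  \<open>\<lambda> |O| = r c\<close>, hence \<open>k + 1\<close> divides \<open>|y\<^bsup>G\<^sub>x\<^esup>|\<close>.

  On the group side, \<open>|y\<^bsup>G\<^sub>x\<^esup>|\<close> divides \<open>|G\<^sub>x : X\<^sub>x| |y\<^bsup>X\<^sub>x\<^esup>|\<close> by two applications of the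
  orbit-stabiliser theorem; since \<open>X \<unlhd> G\<close> and \<open>G\<close> is transitive, all \<open>X\<close>-orbits have
  the same length, which gives that \<open>|G\<^sub>x : X\<^sub>x|\<close> divides \<open>|G : X|\<close>; and as \<open>G\<close> acts
  faithfully on \<open>X\<close> by conjugation, \<open>G\<close> embeds in \<open>Aut(X)\<close> with \<open>X\<close> mapped onto
  \<open>Inn(X)\<close>, so \<open>|G : X|\<close> divides \<open>|Out(X)|\<close>. Altogether \<open>k + 1\<close> divides
  \<open>|Out(X)| |y\<^bsup>X\<^sub>x\<^esup>|\<close>.
\<close>

lemma div_gcd_dvd_of_dvd_mult:
  fixes a b s :: nat
  assumes a: "0 < a" and dvd: "a dvd b * s"
  shows "a div gcd a b dvd s"
proof -
  let ?g = "gcd a b"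
  have "a div ?g * ?g dvd (b div ?g * s) * ?g"
    using dvd by (simp add: ac_simps)
  moreover have "?g \<noteq> 0" using a by simp
  ultimately have "a div ?g dvd b div ?g * s"
    using dvd_times_right_cancel_iff by blast
  moreover have "coprime (a div ?g) (b div ?g)"
    using a div_gcd_coprime by blast
  ultimately show ?thesis
    using coprime_dvd_mult_right_iff by blast
qed

lemma sum_card_swap:
  assumes "finite A" "finite C"
  shows "(\<Sum>a\<in>A. card {c \<in> C. R a c}) = (\<Sum>c\<in>C. card {a \<in> A. R a c})"
proof -
  have card_eq: "\<And>D Q. finite D \<Longrightarrow> card {d \<in> D. Q d} = (\<Sum>d\<in>D. if Q d then 1 else 0)"
    by (simp add: sum.If_cases Collect_conj_eq)
  show ?thesis
    using assms by (simp add: card_eq sum.swap[of _ A C])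
qed

section \<open>Conjugation action on a normal subgroup\<close>

context group
begin

lemma inv_mult_cancel_left [simp]: "x \<in> carrier G \<Longrightarrow> y \<in> carrier G \<Longrightarrow> inv x \<otimes> (x \<otimes> y) = y"
  by (simp add: m_assoc[symmetric])

lemma mult_inv_cancel_left [simp]: "x \<in> carrier G \<Longrightarrow> y \<in> carrier G \<Longrightarrow> x \<otimes> (inv x \<otimes> y) = y"
  by (simp add: m_assoc[symmetric])

lemma conjugation_in_auto:
  assumes N: "N \<lhd> G" and g: "g \<in> carrier G"
  shows "(\<lambda>h\<in>N. g \<otimes> h \<otimes> inv g) \<in> auto (G\<lparr>carrier := N\<rparr>)"
proof -
  interpret N: normal N G by (rule N)
  have NG: "N \<subseteq> carrier G" by (rule N.subset)
  have conj_N: "\<And>h. h \<in> N \<Longrightarrow> g \<otimes> h \<otimes> inv g \<in> N"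
    using g by (rule N.inv_op_closed2)
  have conj_inv_N: "\<And>h. h \<in> N \<Longrightarrow> inv g \<otimes> h \<otimes> g \<in> N"
    using N.inv_op_closed2[of "inv g"] g by simp
  have "bij_betw (\<lambda>h\<in>N. g \<otimes> h \<otimes> inv g) N N"
  proof (rule bij_betwI[where g = "\<lambda>h. inv g \<otimes> h \<otimes> g"])
    show "(\<lambda>h\<in>N. g \<otimes> h \<otimes> inv g) \<in> N \<rightarrow> N" "(\<lambda>h. inv g \<otimes> h \<otimes> g) \<in> N \<rightarrow> N"
      using conj_N conj_inv_N by auto
    show "inv g \<otimes> (\<lambda>h\<in>N. g \<otimes> h \<otimes> inv g) h \<otimes> g = h" if "h \<in> N" for h
      using that g NG by (auto simp: m_assoc)
    show "(\<lambda>h\<in>N. g \<otimes> h \<otimes> inv g) (inv g \<otimes> h \<otimes> g) = h" if "h \<in> N" for h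
      using that g NG conj_inv_N by (auto simp: m_assoc)
  qed
  moreover have "(\<lambda>h\<in>N. g \<otimes> h \<otimes> inv g) \<in> hom (G\<lparr>carrier := N\<rparr>) (G\<lparr>carrier := N\<rparr>)"
    using conj_N g NG by (auto intro!: homI simp: m_assoc N.m_closed)
  ultimately show ?thesis
    by (auto simp: auto_def Bij_def)
qed

lemma normal_index_dvd_out_order:
  assumes fin: "finite (carrier G)" and N: "N \<lhd> G"
    and faithful: "\<forall>g\<in>carrier G. (\<forall>h\<in>N. g \<otimes> h \<otimes> inv g = h) \<longrightarrow> g = \<one>"
  shows "order G div card N dvd out_order (G\<lparr>carrier := N\<rparr>)"
proof -
  interpret N: normal N G by (rule N)
  let ?S = "G\<lparr>carrier := N\<rparr>"
  define conj where "conj g = (\<lambda>h\<in>N. g \<otimes> h \<otimes> inv g)" for g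
  interpret A: group "AutoGroup ?S"
    by (rule group.AutoGroup[OF subgroup_imp_group[OF N.subgroup_axioms]])
  have NG: "N \<subseteq> carrier G" by (rule N.subset)
  have hom: "group_hom G (AutoGroup ?S) conj"
  proof (unfold_locales, rule homI)
    show "conj g \<in> carrier (AutoGroup ?S)" if "g \<in> carrier G" for g
      using conjugation_in_auto[OF N that] by (simp add: conj_def AutoGroup_def)
    show "conj (g \<otimes> g') = conj g \<otimes>\<^bsub>AutoGroup ?S\<^esub> conj g'"
      if "g \<in> carrier G" "g' \<in> carrier G" for g g'
      using that NG conjugation_in_auto[OF N] N.inv_op_closed2
      by (auto simp: conj_def AutoGroup_def BijGroup_def auto_def compose_def
          inv_mult_group m_assoc fun_eq_iff)
  qed
  have inj: "inj_on conj (carrier G)"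
  proof (subst group_hom.inj_on_one_iff[OF hom], intro allI impI)
    fix g assume g: "g \<in> carrier G" and "conj g = \<one>\<^bsub>AutoGroup ?S\<^esub>"
    then have "\<forall>h\<in>N. g \<otimes> h \<otimes> inv g = h"
      by (auto simp: conj_def AutoGroup_def BijGroup_def fun_eq_iff split: if_splits)
    then show "g = \<one>" using faithful g by blast
  qed
  have inn: "inn_auts ?S = conj ` N"
    unfolding inn_auts_def conj_def
    using m_inv_consistent[OF N.subgroup_axioms] by (auto intro!: image_cong)
  have img: "subgroup (conj ` carrier G) (AutoGroup ?S)"
    using group_hom.img_is_subgroup[OF hom] by simp
  have "order (AutoGroup ?S) = card (rcosets\<^bsub>AutoGroup ?S\<^esub> (conj ` carrier G)) * order G"
    using A.lagrange[OF img] card_image[OF inj] by (simp add: order_def)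
  then obtain a where a: "order (AutoGroup ?S) = a * order G" by blast
  obtain t where t: "order G = t * card N"
    using lagrange[OF N.subgroup_axioms, symmetric] by blast
  have "card N > 0"
    using fin NG N.one_closed card_gt_0_iff finite_subset by blast
  moreover have "card (inn_auts ?S) = card N"
    using inn inj_on_subset[OF inj NG] by (simp add: card_image)
  ultimately have "out_order ?S = a * t"
    by (simp add: out_order_def a t)
  then show ?thesis using t \<open>card N > 0\<close> by simp
qed

end

section \<open>Permutation groups\<close>

abbreviation perm_orbit :: "('a \<Rightarrow> 'a) set \<Rightarrow> 'a \<Rightarrow> 'a set" where
  "perm_orbit H y \<equiv> (\<lambda>h. h y) ` H"

abbreviation perm_stabilizer :: "('a \<Rightarrow> 'a) set \<Rightarrow> 'a \<Rightarrow> ('a \<Rightarrow> 'a) set" where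
  "perm_stabilizer H x \<equiv> {h \<in> H. h x = x}"

lemma BijGroup_mult_apply:
  "f \<in> carrier (BijGroup P) \<Longrightarrow> g \<in> carrier (BijGroup P) \<Longrightarrow> z \<in> P \<Longrightarrow>
    (f \<otimes>\<^bsub>BijGroup P\<^esub> g) z = f (g z)"
  by (simp add: BijGroup_def compose_def)

lemma BijGroup_one_apply: "z \<in> P \<Longrightarrow> \<one>\<^bsub>BijGroup P\<^esub> z = z"
  by (simp add: BijGroup_def)

lemma BijGroup_apply_inv_apply:
  assumes f: "f \<in> carrier (BijGroup P)" and z: "z \<in> P"
  shows "f ((inv\<^bsub>BijGroup P\<^esub> f) z) = z" and "(inv\<^bsub>BijGroup P\<^esub> f) (f z) = z"
proof -
  interpret B: group "BijGroup P" by (rule group_BijGroup)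
  show "f ((inv\<^bsub>BijGroup P\<^esub> f) z) = z"
    using BijGroup_mult_apply[OF f B.inv_closed[OF f] z] f z by (simp add: BijGroup_one_apply)
  show "(inv\<^bsub>BijGroup P\<^esub> f) (f z) = z"
    using BijGroup_mult_apply[OF B.inv_closed[OF f] f z] f z by (simp add: BijGroup_one_apply)
qed

lemma finite_Bij: "finite P \<Longrightarrow> finite (Bij P)"
  by (rule finite_subset[OF _ finite_PiE[of P "\<lambda>_. P"]]) (auto simp: Bij_def bij_betw_def PiE_def)

lemma perm_subgroup_finite:
  assumes "finite P" "subgroup H (BijGroup P)"
  shows "finite H"
proof -
  have "H \<subseteq> Bij P" using subgroup.subset[OF assms(2)] by (simp add: BijGroup_def)
  then show ?thesis using finite_Bij[OF assms(1)] by (rule finite_subset)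
qed

lemma perm_subgroup_apply_in: "subgroup H (BijGroup P) \<Longrightarrow> h \<in> H \<Longrightarrow> y \<in> P \<Longrightarrow> h y \<in> P"
  using subgroup.subset by (fastforce simp: BijGroup_def dest: Bij_imp_funcset)

lemma perm_subgroup_inj_on: "subgroup H (BijGroup P) \<Longrightarrow> h \<in> H \<Longrightarrow> inj_on h P"
  using subgroup.subset by (fastforce simp: BijGroup_def Bij_def bij_betw_def)

lemma subgroup_perm_stabilizer:
  assumes H: "subgroup H (BijGroup P)" and x: "x \<in> P"
  shows "subgroup (perm_stabilizer H x) (BijGroup P)"
proof -
  interpret B: group "BijGroup P" by (rule group_BijGroup)
  have HB: "\<And>h. h \<in> H \<Longrightarrow> h \<in> carrier (BijGroup P)" using subgroup.subset[OF H] by blast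
  show ?thesis
  proof (rule B.subgroupI)
    show "perm_stabilizer H x \<noteq> {}"
      using subgroup.one_closed[OF H] x by (auto simp: BijGroup_one_apply)
    show "inv\<^bsub>BijGroup P\<^esub> h \<in> perm_stabilizer H x" if "h \<in> perm_stabilizer H x" for h
      using that HB x BijGroup_apply_inv_apply(2) subgroup.m_inv_closed[OF H] by fastforce
    show "h \<otimes>\<^bsub>BijGroup P\<^esub> h' \<in> perm_stabilizer H x"
      if "h \<in> perm_stabilizer H x" "h' \<in> perm_stabilizer H x" for h h'
      using that HB x subgroup.m_closed[OF H] by (simp add: BijGroup_mult_apply)
  qed (use subgroup.subset[OF H] in auto)
qed

lemma perm_subgroup_action:
  assumes H: "subgroup H (BijGroup P)"
  shows "group_action (BijGroup P\<lparr>carrier := H\<rparr>) P (\<lambda>h. h)"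
  unfolding group_action_def group_hom_def group_hom_axioms_def
  using group.subgroup_imp_group[OF group_BijGroup H] group_BijGroup subgroup.subset[OF H]
  by (auto simp: hom_def)

lemma perm_orbit_eq_orbit:
  "orbit (BijGroup P\<lparr>carrier := H\<rparr>) (\<lambda>h. h) x = perm_orbit H x"
  by (simp add: orbit_def Setcompr_eq_image)

lemma perm_orbit_stabilizer:
  assumes H: "subgroup H (BijGroup P)" and x: "x \<in> P"
  shows "card (perm_orbit H x) * card (perm_stabilizer H x) = card H"
  using group_action.orbit_stabilizer_theorem[OF perm_subgroup_action[OF H] x]
  by (simp add: perm_orbit_eq_orbit stabilizer_def order_def)

lemma card_perm_subgroup_dvd:
  assumes "subgroup K (BijGroup P)" "subgroup H (BijGroup P)" "K \<subseteq> H"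
  shows "card K dvd card H"
proof -
  interpret B: group "BijGroup P" by (rule group_BijGroup)
  have "subgroup K (BijGroup P\<lparr>carrier := H\<rparr>)"
    using B.subgroup_incl assms by blast
  then have "card (rcosets\<^bsub>BijGroup P\<lparr>carrier := H\<rparr>\<^esub> K) * card K = card H"
    using group.lagrange[OF B.subgroup_imp_group[OF assms(2)]] by (simp add: order_def)
  then show ?thesis by (metis dvd_triv_right)
qed

lemma perm_orbit_image:
  assumes H: "subgroup H (BijGroup P)" and g: "g \<in> H" and y: "y \<in> P"
  shows "g ` perm_orbit H y = perm_orbit H y"
proof -
  interpret B: group "BijGroup P" by (rule group_BijGroup)
  have HB: "\<And>h. h \<in> H \<Longrightarrow> h \<in> carrier (BijGroup P)" using subgroup.subset[OF H] by blast
  have "(\<lambda>h. g \<otimes>\<^bsub>BijGroup P\<^esub> h) ` H = H"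
  proof
    show "(\<lambda>h. g \<otimes>\<^bsub>BijGroup P\<^esub> h) ` H \<subseteq> H" using g subgroup.m_closed[OF H] by blast
    show "H \<subseteq> (\<lambda>h. g \<otimes>\<^bsub>BijGroup P\<^esub> h) ` H"
    proof
      fix h assume h: "h \<in> H"
      then have "h = g \<otimes>\<^bsub>BijGroup P\<^esub> (inv\<^bsub>BijGroup P\<^esub> g \<otimes>\<^bsub>BijGroup P\<^esub> h)"
        using g HB by simp
      then show "h \<in> (\<lambda>h. g \<otimes>\<^bsub>BijGroup P\<^esub> h) ` H"
        using g h subgroup.m_closed[OF H] subgroup.m_inv_closed[OF H] by blast
    qed
  qed
  then have "perm_orbit H y = (\<lambda>h. h y) ` (\<lambda>h. g \<otimes>\<^bsub>BijGroup P\<^esub> h) ` H"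
    by simp
  also have "\<dots> = g ` perm_orbit H y"
    using g HB y by (simp add: image_image BijGroup_mult_apply)
  finally show ?thesis by simp
qed

lemma card_perm_orbit_mult_dvd:
  assumes fin: "finite P" and y: "y \<in> P"
    and K: "subgroup K (BijGroup P)" and H: "subgroup H (BijGroup P)" and KH: "K \<subseteq> H"
  shows "card (perm_orbit H y) * card K dvd card H * card (perm_orbit K y)"
proof -
  have "card (perm_stabilizer K y) dvd card (perm_stabilizer H y)"
    using KH by (intro card_perm_subgroup_dvd[OF subgroup_perm_stabilizer[OF K y]
        subgroup_perm_stabilizer[OF H y]]) auto
  then obtain e where e: "card (perm_stabilizer H y) = card (perm_stabilizer K y) * e"
    by (rule dvdE)
  have "card H * card (perm_orbit K y) = (card (perm_orbit H y) * card K) * e"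
    using perm_orbit_stabilizer[OF H y] perm_orbit_stabilizer[OF K y, symmetric] e
    by (simp add: ac_simps)
  then show ?thesis by (rule dvdI)
qed

lemma perm_orbit_conj:
  assumes G: "subgroup G (BijGroup P)" and N: "N \<lhd> (BijGroup P\<lparr>carrier := G\<rparr>)"
    and g: "g \<in> G" and x: "x \<in> P"
  shows "perm_orbit N (g x) = g ` perm_orbit N x"
proof -
  interpret B: group "BijGroup P" by (rule group_BijGroup)
  have NG: "N \<subseteq> G" using normal_imp_subgroup[OF N] subgroup.subset by force
  have GB: "\<And>h. h \<in> G \<Longrightarrow> h \<in> carrier (BijGroup P)" using subgroup.subset[OF G] by blast
  have conj: "f \<otimes>\<^bsub>BijGroup P\<^esub> h \<otimes>\<^bsub>BijGroup P\<^esub> inv\<^bsub>BijGroup P\<^esub> f \<in> N"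
    if "f \<in> G" "h \<in> N" for f h
    using normal.inv_op_closed2[OF N, of f h] that B.m_inv_consistent[OF G] by simp
  have gx: "g x \<in> P" using perm_subgroup_apply_in[OF G g x] .
  show ?thesis
  proof
    show "perm_orbit N (g x) \<subseteq> g ` perm_orbit N x"
    proof
      fix z assume "z \<in> perm_orbit N (g x)"
      then obtain h where h: "h \<in> N" "z = h (g x)" by blast
      define h' where "h' = inv\<^bsub>BijGroup P\<^esub> g \<otimes>\<^bsub>BijGroup P\<^esub> h \<otimes>\<^bsub>BijGroup P\<^esub> g"
      have h'N: "h' \<in> N"
        using conj[of "inv\<^bsub>BijGroup P\<^esub> g" h] g h GB subgroup.m_inv_closed[OF G]
        by (simp add: h'_def)
      have hB: "h \<in> carrier (BijGroup P)" and hgx: "h (g x) \<in> P"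
        using h NG GB perm_subgroup_apply_in[OF G _ gx] by auto
      have "h' x = (inv\<^bsub>BijGroup P\<^esub> g) (h (g x))"
        using GB[OF g] hB x gx by (simp add: h'_def BijGroup_mult_apply)
      then have "g (h' x) = z"
        using GB[OF g] hgx h(2) by (simp add: BijGroup_apply_inv_apply)
      then show "z \<in> g ` perm_orbit N x" using h'N by blast
    qed
    show "g ` perm_orbit N x \<subseteq> perm_orbit N (g x)"
    proof
      fix z assume "z \<in> g ` perm_orbit N x"
      then obtain h where h: "h \<in> N" "z = g (h x)" by blast
      define h' where "h' = g \<otimes>\<^bsub>BijGroup P\<^esub> h \<otimes>\<^bsub>BijGroup P\<^esub> inv\<^bsub>BijGroup P\<^esub> g"
      have "h' \<in> N" using conj g h by (simp add: h'_def)
      moreover have "h' (g x) = z"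
      proof -
        have hB: "h \<in> carrier (BijGroup P)" using h NG GB by auto
        have "h' (g x) = g (h ((inv\<^bsub>BijGroup P\<^esub> g) (g x)))"
          using GB[OF g] hB gx perm_subgroup_apply_in[OF G] subgroup.m_inv_closed[OF G g]
          by (simp add: h'_def BijGroup_mult_apply)
        then show ?thesis using GB[OF g] x h(2) by (simp add: BijGroup_apply_inv_apply)
      qed
      ultimately show "z \<in> perm_orbit N (g x)" by blast
    qed
  qed
qed

lemma card_perm_orbit_normal_dvd:
  assumes fin: "finite P" and G: "subgroup G (BijGroup P)"
    and N: "N \<lhd> (BijGroup P\<lparr>carrier := G\<rparr>)"
    and trans: "perm_orbit G x = P" and x: "x \<in> P"
  shows "card (perm_orbit N x) dvd card P"
proof -
  let ?N = "BijGroup P\<lparr>carrier := N\<rparr>"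
  have NB: "subgroup N (BijGroup P)"
    using group.incl_subgroup[OF group_BijGroup G normal_imp_subgroup[OF N]] .
  interpret N: group_action ?N P "\<lambda>h. h" by (rule perm_subgroup_action[OF NB])
  have orbit_card: "card orb = card (perm_orbit N x)" if orb: "orb \<in> orbits ?N P (\<lambda>h. h)" for orb
  proof -
    obtain z where "z \<in> P" and orb_z: "orb = perm_orbit N z"
      using orb by (auto simp: orbits_def perm_orbit_eq_orbit)
    moreover have "z \<in> perm_orbit G x" using trans \<open>z \<in> P\<close> by simp
    ultimately obtain g where g: "g \<in> G" and orb_gx: "orb = perm_orbit N (g x)"
      by blast
    have "perm_orbit N x \<subseteq> P" using perm_subgroup_apply_in[OF NB _ x] by blast
    then have "inj_on g (perm_orbit N x)"
      by (rule inj_on_subset[OF perm_subgroup_inj_on[OF G g]])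
    then show ?thesis
      using orb_gx perm_orbit_conj[OF G N g x] by (simp add: card_image)
  qed
  have "card P = (\<Sum>orb\<in>orbits ?N P (\<lambda>h. h). card orb)"
    using N.disjoint_sum[OF fin, of "\<lambda>_. 1::nat"] by simp
  also have "\<dots> = card (orbits ?N P (\<lambda>h. h)) * card (perm_orbit N x)"
    using orbit_card by simp
  finally show ?thesis by simp
qed

lemma card_perm_stabilizer_normal_dvd:
  assumes fin: "finite P" and G: "subgroup G (BijGroup P)"
    and N: "N \<lhd> (BijGroup P\<lparr>carrier := G\<rparr>)"
    and trans: "perm_orbit G x = P" and x: "x \<in> P"
  shows "card (perm_stabilizer G x) * card N dvd card G * card (perm_stabilizer N x)"
proof -
  have NB: "subgroup N (BijGroup P)"
    using group.incl_subgroup[OF group_BijGroup G normal_imp_subgroup[OF N]] .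
  obtain m where m: "card P = card (perm_orbit N x) * m"
    using card_perm_orbit_normal_dvd[OF assms] by (rule dvdE)
  have G_eq: "card G = card (perm_orbit N x) * m * card (perm_stabilizer G x)"
    using perm_orbit_stabilizer[OF G x] trans m by simp
  have N_eq: "card N = card (perm_orbit N x) * card (perm_stabilizer N x)"
    using perm_orbit_stabilizer[OF NB x] by simp
  have "card G * card (perm_stabilizer N x) = (card (perm_stabilizer G x) * card N) * m"
    unfolding G_eq N_eq by (simp only: ac_simps)
  then show ?thesis by (rule dvdI)
qed

lemma card_perm_orbit_stabilizer_dvd_index:
  assumes fin: "finite P" and G: "subgroup G (BijGroup P)"
    and N: "N \<lhd> (BijGroup P\<lparr>carrier := G\<rparr>)"
    and trans: "perm_orbit G x = P" and x: "x \<in> P" and y: "y \<in> P"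
  shows "card (perm_orbit (perm_stabilizer G x) y)
    dvd (card G div card N) * card (perm_orbit (perm_stabilizer N x) y)"
proof -
  let ?Gx = "perm_stabilizer G x" and ?Nx = "perm_stabilizer N x"
  have NB: "subgroup N (BijGroup P)"
    using group.incl_subgroup[OF group_BijGroup G normal_imp_subgroup[OF N]] .
  have NG: "N \<subseteq> G" using normal_imp_subgroup[OF N] subgroup.subset by force
  obtain t where t: "card G = card N * t"
    using card_perm_subgroup_dvd[OF NB G NG] by (rule dvdE)
  have pos: "0 < card ?Nx" "0 < card N"
    using subgroup.one_closed[OF subgroup_perm_stabilizer[OF NB x]] subgroup.one_closed[OF NB]
      perm_subgroup_finite[OF fin NB] by (auto simp: card_gt_0_iff)
  have "?Nx \<subseteq> ?Gx" using NG by blast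
  then have "card (perm_orbit ?Gx y) * card ?Nx dvd card ?Gx * card (perm_orbit ?Nx y)"
    by (rule card_perm_orbit_mult_dvd[OF fin y subgroup_perm_stabilizer[OF NB x]
          subgroup_perm_stabilizer[OF G x]])
  then have "card (perm_orbit ?Gx y) * card ?Nx * card N dvd card ?Gx * card (perm_orbit ?Nx y) * card N"
    by (rule mult_dvd_mono) simp
  also have "\<dots> = (card ?Gx * card N) * card (perm_orbit ?Nx y)"
    by (simp add: ac_simps)
  also have "\<dots> dvd (card G * card ?Nx) * card (perm_orbit ?Nx y)"
    using card_perm_stabilizer_normal_dvd[OF fin G N trans x] by (rule mult_dvd_mono) simp
  also have "\<dots> = (t * card (perm_orbit ?Nx y)) * (card ?Nx * card N)"
    by (simp add: t ac_simps)
  finally have "card (perm_orbit ?Gx y) * (card ?Nx * card N)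
      dvd (t * card (perm_orbit ?Nx y)) * (card ?Nx * card N)"
    by (simp only: mult.assoc)
  then show ?thesis
    using pos t by simp
qed

section \<open>Designs\<close>

lemma design_blocks_through_pair:
  assumes "design_2 P B v k lam" "x \<in> P" "y \<in> P" "y \<noteq> x"
  shows "card {b \<in> {b \<in> B. x \<in> b}. y \<in> b} = lam"
proof -
  have "{b \<in> {b \<in> B. x \<in> b}. y \<in> b} = {b \<in> B. x \<in> b \<and> y \<in> b}" by auto
  then show ?thesis using assms by (simp add: design_2_def)
qed

lemma design_pair_in_block:
  assumes "design_2 P B v k lam" "0 < lam" "x \<in> P" "y \<in> P" "x \<noteq> y"
  shows "\<exists>b\<in>B. x \<in> b \<and> y \<in> b"
proof -
  have "card {b \<in> B. x \<in> b \<and> y \<in> b} = lam"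
    using assms by (simp add: design_2_def)
  then have "{b \<in> B. x \<in> b \<and> y \<in> b} \<noteq> {}" using assms(2) by force
  then show ?thesis by blast
qed

lemma design_finite_blocks: "design_2 P B v k lam \<Longrightarrow> finite B"
  unfolding design_2_def by (meson Pow_iff finite_Pow_iff finite_subset subsetI)

lemma design_replication_number:
  assumes D: "design_2 P B v k lam" and x: "x \<in> P"
  shows "card {b \<in> B. x \<in> b} * (k - 1) = (v - 1) * lam"
proof -
  have fP: "finite P" and v: "card P = v" and blocks: "\<And>b. b \<in> B \<Longrightarrow> b \<subseteq> P \<and> card b = k"
    using D by (auto simp: design_2_def)
  let ?Bx = "{b \<in> B. x \<in> b}"
  have "(v - 1) * lam = (\<Sum>y\<in>P - {x}. lam)"
    using fP v x by simp
  also have "\<dots> = (\<Sum>y\<in>P - {x}. card {b \<in> ?Bx. y \<in> b})"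
    using design_blocks_through_pair[OF D x] by (intro sum.cong) auto
  also have "\<dots> = (\<Sum>b\<in>?Bx. card {y \<in> P - {x}. y \<in> b})"
    using fP design_finite_blocks[OF D] by (intro sum_card_swap) auto
  also have "\<dots> = (\<Sum>b\<in>?Bx. k - 1)"
  proof (rule sum.cong)
    fix b assume "b \<in> ?Bx"
    then have "{y \<in> P - {x}. y \<in> b} = b - {x}" "finite b" "x \<in> b" "card b = k"
      using blocks fP finite_subset by blast+
    then show "card {y \<in> P - {x}. y \<in> b} = k - 1" by simp
  qed simp
  finally show ?thesis by simp
qed

lemma design_perm_orbit_incidences:
  assumes D: "design_2 P B v k lam" and H: "subgroup H (BijGroup P)"
    and fixes_x: "\<forall>h\<in>H. h x = x"
    and block_trans: "\<forall>b\<in>B. \<forall>c\<in>B. x \<in> b \<longrightarrow> x \<in> c \<longrightarrow> (\<exists>h\<in>H. h ` b = c)"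
    and x: "x \<in> P" and y: "y \<in> P" "y \<noteq> x" and b0: "b0 \<in> B" "x \<in> b0"
  shows "card (perm_orbit H y) * lam = card {b \<in> B. x \<in> b} * card (b0 \<inter> perm_orbit H y)"
proof -
  let ?O = "perm_orbit H y"
  let ?Bx = "{b \<in> B. x \<in> b}"
  have fP: "finite P" and blocks: "\<And>b. b \<in> B \<Longrightarrow> b \<subseteq> P"
    using D by (auto simp: design_2_def)
  have OP: "?O \<subseteq> P" using perm_subgroup_apply_in[OF H _ y(1)] by blast
  have x_notin_O: "x \<notin> ?O"
  proof
    assume "x \<in> ?O"
    then obtain h where h: "h \<in> H" "h y = h x" using fixes_x by force
    then show False using perm_subgroup_inj_on[OF H h(1)] x y by (simp add: inj_on_eq_iff)
  qed
  have same_meet: "card {z \<in> ?O. z \<in> b} = card (b0 \<inter> ?O)" if b: "b \<in> ?Bx" for b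
  proof -
    have "b \<in> B" "x \<in> b" using b by simp_all
    then obtain h where h: "h \<in> H" "h ` b0 = b" using block_trans b0 by blast
    have "b0 \<inter> ?O \<subseteq> P" using OP by blast
    then have "inj_on h (b0 \<inter> ?O)"
      by (rule inj_on_subset[OF perm_subgroup_inj_on[OF H h(1)]])
    then have "card (b0 \<inter> ?O) = card (h ` (b0 \<inter> ?O))" by (simp add: card_image)
    also have "h ` (b0 \<inter> ?O) = h ` b0 \<inter> h ` ?O"
      using inj_on_image_Int[OF perm_subgroup_inj_on[OF H h(1)] blocks[OF b0(1)] OP] .
    also have "\<dots> = {z \<in> ?O. z \<in> b}"
      using perm_orbit_image[OF H h(1) y(1)] h(2) by blast
    finally show ?thesis by simp
  qed
  have "card ?O * lam = (\<Sum>z\<in>?O. lam)" by simp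
  also have "\<dots> = (\<Sum>z\<in>?O. card {b \<in> ?Bx. z \<in> b})"
    using design_blocks_through_pair[OF D x] OP x_notin_O by (intro sum.cong) auto
  also have "\<dots> = (\<Sum>b\<in>?Bx. card {z \<in> ?O. z \<in> b})"
    using design_finite_blocks[OF D] finite_subset[OF OP fP] by (intro sum_card_swap) auto
  also have "\<dots> = card ?Bx * card (b0 \<inter> ?O)"
    using same_meet by simp
  finally show ?thesis .
qed

lemma square_design_perm_orbit_dvd:
  assumes D: "design_2 P B (k\<^sup>2) k lam" and k: "1 < k" and lam: "0 < lam"
    and H: "subgroup H (BijGroup P)" and fixes_x: "\<forall>h\<in>H. h x = x"
    and block_trans: "\<forall>b\<in>B. \<forall>c\<in>B. x \<in> b \<longrightarrow> x \<in> c \<longrightarrow> (\<exists>h\<in>H. h ` b = c)"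
    and x: "x \<in> P" and y: "y \<in> P" "y \<noteq> x"
  shows "(k + 1) dvd card (perm_orbit H y)"
proof -
  have "card {b \<in> B. x \<in> b} * (k - 1) = (k\<^sup>2 - 1) * lam"
    by (rule design_replication_number[OF D x])
  also have "k\<^sup>2 - 1 = (k + 1) * (k - 1)"
    using k by (simp add: power2_eq_square algebra_simps)
  finally have "card {b \<in> B. x \<in> b} * (k - 1) = (lam * (k + 1)) * (k - 1)"
    by (simp only: ac_simps)
  then have r: "card {b \<in> B. x \<in> b} = lam * (k + 1)"
    using k by simp
  then have "{b \<in> B. x \<in> b} \<noteq> {}" using lam by force
  then obtain b0 where b0: "b0 \<in> B" "x \<in> b0" by blast
  have "card (perm_orbit H y) * lam = ((k + 1) * card (b0 \<inter> perm_orbit H y)) * lam"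
    using design_perm_orbit_incidences[OF D H fixes_x block_trans x y b0] unfolding r
    by (simp only: ac_simps)
  then have "card (perm_orbit H y) = (k + 1) * card (b0 \<inter> perm_orbit H y)"
    using lam by (subst (asm) mult_right_cancel) simp_all
  then show ?thesis by (rule dvdI)
qed

section \<open>Flag-transitive automorphism groups\<close>

lemma flag_transitive_perm_orbit:
  assumes D: "design_2 P B v k lam" and lam: "0 < lam"
    and ft: "flag_transitive P B G" and G: "subgroup G (BijGroup P)"
    and x: "x \<in> P" and y: "y \<in> P" "y \<noteq> x"
  shows "perm_orbit G x = P"
proof
  show "perm_orbit G x \<subseteq> P" using perm_subgroup_apply_in[OF G _ x] by blast
  have on_block: "\<exists>b\<in>B. z \<in> b" if "z \<in> P" for z
  proof -
    obtain w where "w \<in> P" "w \<noteq> z" using x y by blast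
    then show ?thesis using design_pair_in_block[OF D lam that] by blast
  qed
  show "P \<subseteq> perm_orbit G x"
  proof
    fix z assume z: "z \<in> P"
    obtain b c where "b \<in> B" "x \<in> b" "c \<in> B" "z \<in> c" using on_block x z by blast
    then obtain g where "g \<in> G" "g x = z"
      using ft x z unfolding flag_transitive_def by blast
    then show "z \<in> perm_orbit G x" by blast
  qed
qed

lemma flag_transitive_stabilizer_block_transitive:
  "flag_transitive P B G \<Longrightarrow> x \<in> P \<Longrightarrow>
    \<forall>b\<in>B. \<forall>c\<in>B. x \<in> b \<longrightarrow> x \<in> c \<longrightarrow> (\<exists>g\<in>perm_stabilizer G x. g ` b = c)"
  unfolding flag_transitive_def by blast

lemma almost_simple_index_dvd_out_order:
  assumes fin: "finite P" and G: "subgroup G (BijGroup P)"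
    and "almost_simple_with_socle (BijGroup P\<lparr>carrier := G\<rparr>) Soc"
  shows "card G div card Soc dvd out_order (BijGroup P\<lparr>carrier := Soc\<rparr>)"
  using group.normal_index_dvd_out_order[of "BijGroup P\<lparr>carrier := G\<rparr>" Soc] assms
    perm_subgroup_finite[OF fin G]
  by (simp add: almost_simple_with_socle_def order_def)

theorem lemma3p5:
  fixes P :: "'a set" and B :: "'a set set" and k lam :: nat
    and G Soc :: "('a \<Rightarrow> 'a) set"
  assumes "nontrivial_design_2 P B (k\<^sup>2) k lam"
    and "lam dvd k"
    and "design_aut_group P B G"
    and "flag_transitive P B G"
    and "almost_simple_with_socle ((BijGroup P)\<lparr>carrier := G\<rparr>) Soc"
  shows "\<forall>x\<in>P. \<forall>y\<in>P. y \<noteq> x \<longrightarrow>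
     ((k + 1) div gcd (k + 1) (out_order ((BijGroup P)\<lparr>carrier := Soc\<rparr>)))
        dvd card ((\<lambda>h. h y) ` {h \<in> Soc. h x = x}) \<and>
     ((k + 1) div gcd (k + 1) (out_order ((BijGroup P)\<lparr>carrier := Soc\<rparr>)))
        dvd card {h \<in> Soc. h x = x}"
proof (intro ballI impI)
  fix x y assume x: "x \<in> P" and y: "y \<in> P" and yx: "y \<noteq> x"
  have D: "design_2 P B (k\<^sup>2) k lam" and k: "2 < k" and fin: "finite P"
    using assms(1) by (auto simp: nontrivial_design_2_def design_2_def)
  \<comment> \<open>\<open>\<lambda> dvd k\<close> is used only to exclude \<open>\<lambda> = 0\<close>.\<close>
  have lam: "0 < lam" using assms(2) k by (auto intro: Nat.gr0I)
  have G: "subgroup G (BijGroup P)" using assms(3) by (simp add: design_aut_group_def)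
  have N: "Soc \<lhd> (BijGroup P\<lparr>carrier := G\<rparr>)"
    using assms(5) by (simp add: almost_simple_with_socle_def)
  have SB: "subgroup Soc (BijGroup P)"
    using group.incl_subgroup[OF group_BijGroup G normal_imp_subgroup[OF N]] .
  let ?d = "(k + 1) div gcd (k + 1) (out_order (BijGroup P\<lparr>carrier := Soc\<rparr>))"
  let ?s = "card (perm_orbit (perm_stabilizer Soc x) y)"
  have "k + 1 dvd card (perm_orbit (perm_stabilizer G x) y)"
    using square_design_perm_orbit_dvd[OF D _ lam subgroup_perm_stabilizer[OF G x] _
        flag_transitive_stabilizer_block_transitive[OF assms(4) x] x y yx] k
    by simp
  also have "\<dots> dvd (card G div card Soc) * ?s"
    using card_perm_orbit_stabilizer_dvd_index[OF fin G N
        flag_transitive_perm_orbit[OF D lam assms(4) G x y yx] x y] .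
  also have "\<dots> dvd out_order (BijGroup P\<lparr>carrier := Soc\<rparr>) * ?s"
    using almost_simple_index_dvd_out_order[OF fin G assms(5)] by (rule mult_dvd_mono) simp
  finally have orbit_dvd: "?d dvd ?s"
    by (rule div_gcd_dvd_of_dvd_mult[rotated]) simp
  have "?s dvd card (perm_stabilizer Soc x)"
    by (rule dvdI[OF perm_orbit_stabilizer[OF subgroup_perm_stabilizer[OF SB x] y, symmetric]])
  then show "?d dvd ?s \<and> ?d dvd card (perm_stabilizer Soc x)"
    using orbit_dvd dvd_trans by blast
qed

end
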